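(* For every $d\ge 1$ and $\varepsilon\le\frac{1}{d+1}$, every algorithm for robust mean estimation of $d$-dimensional distributions with covariance $\Sigma\preceq\sigma^2 I$ in the population limit has, on some input, error \[ \mathbb{E}[\|\widehat{\mu}-\mu\|] \ge JUNG_d\cdot\sqrt{2\sigma^2\varepsilon}. \]
   Context: $JUNG_d := \sqrt{\frac{2d}{d+1}}$. Robust mean estimation in the population limit: there is an unknown true distribution $D$ on $\mathbb{R}^d$ with mean $\mu$ and covariance $\Sigma\preceq\sigma^2 I$; an adversary replaces it by any distribution $D'$ with total variation distance $TV(D,D')\le\varepsilon$. The (possibly randomized) algorithm is given $\varepsilon$, $\sigma^2$ and the distribution $D'$ itself, and outputs $\widehat{\mu}\in\mathbb{R}^d$; its error is $\mathbb{E}\|\widehat{\mu}-\mu\|$ over the algorithm's randomness. "On some input" means there exist $\sigma$, such a $D$ and such a $D'$ for which the stated lower bound holds. *)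

theory Defs
  imports "HOL-Probability.Probability"
begin

definition jung_const :: "nat \<Rightarrow> real" where
  "jung_const d = sqrt (2 * real d / (real d + 1))"

definition is_distribution :: "(real ^ 'n) measure \<Rightarrow> bool" where
  "is_distribution M \<longleftrightarrow> prob_space M \<and> sets M = sets borel"

definition tv_dist :: "(real ^ 'n) measure \<Rightarrow> (real ^ 'n) measure \<Rightarrow> real" where
  "tv_dist M N = (SUP A \<in> sets borel. \<bar>measure M A - measure N A\<bar>)"

definition dist_mean :: "(real ^ 'n) measure \<Rightarrow> real ^ 'n" where
  "dist_mean M = (\<integral>x. x \<partial>M)"

definition dist_cov :: "(real ^ 'n) measure \<Rightarrow> real ^ 'n ^ 'n" where
  "dist_cov M = (\<chi> i j. \<integral>x. (x $ i - dist_mean M $ i) * (x $ j - dist_mean M $ j) \<partial>M)"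

definition loewner_le :: "real ^ 'n ^ 'n \<Rightarrow> real ^ 'n ^ 'n \<Rightarrow> bool" where
  "loewner_le A B \<longleftrightarrow> (\<forall>v. v \<bullet> (A *v v) \<le> v \<bullet> (B *v v))"

definition bounded_cov :: "real \<Rightarrow> (real ^ 'n) measure \<Rightarrow> bool" where
  "bounded_cov \<sigma> D \<longleftrightarrow> is_distribution D \<and> integrable D (\<lambda>x. x) \<and>
     integrable D (\<lambda>x. (norm x)\<^sup>2) \<and> loewner_le (dist_cov D) ((\<sigma>\<^sup>2) *\<^sub>R mat 1)"

text \<open>A (randomized) population-limit algorithm maps (\<epsilon>, \<sigma>^2, D') to the distribution
  of its output; its error is E||\<mu>hat - \<mu>||.\<close>
definition alg_error ::
  "(real \<Rightarrow> real \<Rightarrow> (real ^ 'n) measure \<Rightarrow> (real ^ 'n) measure) \<Rightarrow> real \<Rightarrow> real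
     \<Rightarrow> (real ^ 'n) measure \<Rightarrow> real ^ 'n \<Rightarrow> ennreal" where
  "alg_error A \<epsilon> \<sigma> D' \<mu> = (\<integral>\<^sup>+ y. ennreal (norm (y - \<mu>)) \<partial>(A \<epsilon> (\<sigma>\<^sup>2) D'))"

end

theory Submission
  imports Defs
begin

text \<open>
  Let \<open>v\<^sub>0, ..., v\<^sub>d\<close> be the vertices of a regular simplex centred at \<open>0\<close> with
  \<open>|v\<^sub>j|\<^sup>2 = d\<close>; they sum to \<open>0\<close> and form a tight frame,
  \<open>\<Sum>\<^sub>j (u \<bullet> v\<^sub>j)\<^sup>2 = (d + 1) |u|\<^sup>2\<close>.
  The corrupted distribution \<open>D'\<close> puts mass \<open>\<epsilon>\<close> on each \<open>-v\<^sub>j\<close> and the rest on \<open>0\<close>;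
  the true distribution \<open>D\<^sub>i\<close> moves the atom at \<open>-v\<^sub>i\<close> to \<open>v\<^sub>i\<close>.
  Then \<open>TV(D\<^sub>i, D') \<le> \<epsilon>\<close>, the covariance of \<open>D\<^sub>i\<close> is bounded by its second moment
  \<open>\<epsilon> (d + 1) I = \<sigma>\<^sup>2 I\<close>, and its mean is \<open>2 \<epsilon> v\<^sub>i\<close>.
  The algorithm sees only \<open>D'\<close>, and by Cauchy-Schwarz against the \<open>v\<^sub>i\<close> every point \<open>y\<close>
  satisfies \<open>\<Sum>\<^sub>i |y - 2 \<epsilon> v\<^sub>i| \<ge> (d + 1) 2 \<epsilon> \<surd>d\<close>; so for some \<open>i\<close> the expected error
  is at least \<open>2 \<epsilon> \<surd>d = JUNG\<^sub>d \<surd>(2 \<sigma>\<^sup>2 \<epsilon>)\<close>.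
\<close>

definition prob_weights :: "('k::finite \<Rightarrow> real) \<Rightarrow> bool" where
  "prob_weights w \<longleftrightarrow> (\<forall>k. 0 \<le> w k) \<and> sum w UNIV = 1"

definition discrete_distr :: "('k::finite \<Rightarrow> real) \<Rightarrow> ('k \<Rightarrow> 'a::topological_space) \<Rightarrow> 'a measure" where
  "discrete_distr w x = distr (measure_pmf (embed_pmf w)) borel x"

lemma pmf_embed_pmf_prob_weights:
  assumes "prob_weights w"
  shows "pmf (embed_pmf w) k = w k"
proof (rule pmf_embed_pmf)
  show "(\<integral>\<^sup>+k. ennreal (w k) \<partial>count_space UNIV) = 1"
    using assms by (simp add: prob_weights_def nn_integral_count_space_finite)
qed (use assms in \<open>simp add: prob_weights_def\<close>)

lemma prob_space_discrete_distr: "prob_space (discrete_distr w x)"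
  unfolding discrete_distr_def by (auto intro!: measure_pmf.prob_space_distr)

lemma is_distribution_discrete_distr: "is_distribution (discrete_distr w x)"
  by (simp add: is_distribution_def prob_space_discrete_distr) (simp add: discrete_distr_def)

lemma integrable_discrete_distr:
  fixes f :: "'a::topological_space \<Rightarrow> 'b::{banach, second_countable_topology}"
  assumes "f \<in> borel_measurable borel"
  shows "integrable (discrete_distr w x) f"
  unfolding discrete_distr_def
  by (subst integrable_distr_eq) (auto simp: assms intro!: integrable_measure_pmf_finite)

lemma integral_discrete_distr:
  fixes f :: "'a::topological_space \<Rightarrow> 'b::{banach, second_countable_topology}"
  assumes "prob_weights w" "f \<in> borel_measurable borel"
  shows "integral\<^sup>L (discrete_distr w x) f = (\<Sum>k\<in>UNIV. w k *\<^sub>R f (x k))"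
  unfolding discrete_distr_def
  by (subst integral_distr)
    (auto simp: assms integral_measure_pmf[of UNIV] pmf_embed_pmf_prob_weights)

lemma measure_discrete_distr:
  assumes "prob_weights w" "S \<in> sets borel"
  shows "measure (discrete_distr w x) S = (\<Sum>k\<in>UNIV. w k * indicator S (x k))"
proof -
  have "measure (discrete_distr w x) S = integral\<^sup>L (discrete_distr w x) (indicator S)"
    by (simp add: discrete_distr_def)
  also have "\<dots> = (\<Sum>k\<in>UNIV. w k * indicator S (x k))"
    using assms by (subst integral_discrete_distr) auto
  finally show ?thesis .
qed

lemma dist_mean_discrete_distr:
  "prob_weights w \<Longrightarrow> dist_mean (discrete_distr w x) = (\<Sum>k\<in>UNIV. w k *\<^sub>R x k)"
  unfolding dist_mean_def by (simp add: integral_discrete_distr)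

lemma quadratic_form_dist_cov_discrete_distr:
  assumes "prob_weights w"
  shows "u \<bullet> (dist_cov (discrete_distr w x) *v u) =
    (\<Sum>k\<in>UNIV. w k * (u \<bullet> (x k - dist_mean (discrete_distr w x)))\<^sup>2)"
proof -
  define y where "y k = x k - dist_mean (discrete_distr w x)" for k
  have "dist_cov (discrete_distr w x) $ a $ b = (\<Sum>k\<in>UNIV. w k * (y k $ a * y k $ b))" for a b
    unfolding dist_cov_def y_def using assms by (simp add: integral_discrete_distr)
  then have "u \<bullet> (dist_cov (discrete_distr w x) *v u) =
      (\<Sum>a\<in>UNIV. \<Sum>b\<in>UNIV. \<Sum>k\<in>UNIV. w k * ((u $ a * y k $ a) * (u $ b * y k $ b)))"
    by (simp add: inner_vec_def matrix_vector_mult_def sum_distrib_left sum_distrib_right mult_ac)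
  also have "\<dots> = (\<Sum>a\<in>UNIV. \<Sum>k\<in>UNIV. \<Sum>b\<in>UNIV. w k * ((u $ a * y k $ a) * (u $ b * y k $ b)))"
    by (rule sum.cong[OF refl], rule sum.swap)
  also have "\<dots> = (\<Sum>k\<in>UNIV. \<Sum>a\<in>UNIV. \<Sum>b\<in>UNIV. w k * ((u $ a * y k $ a) * (u $ b * y k $ b)))"
    by (rule sum.swap)
  also have "\<dots> = (\<Sum>k\<in>UNIV. w k * ((\<Sum>a\<in>UNIV. u $ a * y k $ a) * (\<Sum>b\<in>UNIV. u $ b * y k $ b)))"
    by (simp only: sum_product) (simp only: sum_distrib_left)
  finally show ?thesis
    by (simp add: y_def inner_vec_def power2_eq_square)
qed

lemma weighted_variance_le_second_moment:
  assumes "prob_weights w"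
  shows "(\<Sum>k\<in>UNIV. w k * (a k - (\<Sum>j\<in>UNIV. w j * a j))\<^sup>2) \<le> (\<Sum>k\<in>UNIV. w k * (a k)\<^sup>2)"
proof -
  define c where "c = (\<Sum>j\<in>UNIV. w j * a j)"
  have "(\<Sum>k\<in>UNIV. w k * (a k - c)\<^sup>2) =
      (\<Sum>k\<in>UNIV. w k * (a k)\<^sup>2) - 2 * c * (\<Sum>k\<in>UNIV. w k * a k) + c\<^sup>2 * sum w UNIV"
    by (simp add: power2_eq_square algebra_simps sum.distrib sum_subtractf
        sum_distrib_left sum_distrib_right)
  also have "\<dots> = (\<Sum>k\<in>UNIV. w k * (a k)\<^sup>2) - c\<^sup>2"
    using assms by (simp add: prob_weights_def c_def power2_eq_square)
  finally show ?thesis by (simp add: c_def)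
qed

lemma bounded_cov_discrete_distr:
  fixes x :: "'k::finite \<Rightarrow> real ^ 'n"
  assumes "prob_weights w" and second_moment: "\<And>u. (\<Sum>k\<in>UNIV. w k * (u \<bullet> x k)\<^sup>2) \<le> \<sigma>\<^sup>2 * (u \<bullet> u)"
  shows "bounded_cov \<sigma> (discrete_distr w x)"
  unfolding bounded_cov_def loewner_le_def
proof (intro conjI allI)
  fix u :: "real ^ 'n"
  have "u \<bullet> (dist_cov (discrete_distr w x) *v u) =
      (\<Sum>k\<in>UNIV. w k * (u \<bullet> x k - (\<Sum>j\<in>UNIV. w j * (u \<bullet> x j)))\<^sup>2)"
    using assms(1) by (simp add: quadratic_form_dist_cov_discrete_distr dist_mean_discrete_distr
        inner_diff_right inner_sum_right)
  also have "\<dots> \<le> (\<Sum>k\<in>UNIV. w k * (u \<bullet> x k)\<^sup>2)"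
    using assms(1) by (rule weighted_variance_le_second_moment)
  also have "\<dots> \<le> \<sigma>\<^sup>2 * (u \<bullet> u)"
    by (rule second_moment)
  also have "\<dots> = u \<bullet> (\<sigma>\<^sup>2 *\<^sub>R u)"
    by simp
  also have "\<sigma>\<^sup>2 *\<^sub>R u = (\<sigma>\<^sup>2 *\<^sub>R mat 1) *v u"
    by (simp add: vec_eq_iff matrix_vector_mult_def mat_def if_distrib if_distribR cong: if_cong)
  finally show "u \<bullet> (dist_cov (discrete_distr w x) *v u) \<le> u \<bullet> ((\<sigma>\<^sup>2 *\<^sub>R mat 1) *v u)" .
qed (auto simp: is_distribution_discrete_distr intro!: integrable_discrete_distr)

lemma tv_dist_discrete_distr_le:
  fixes x y :: "'k::finite \<Rightarrow> real ^ 'n"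
  assumes "prob_weights w"
  shows "tv_dist (discrete_distr w x) (discrete_distr w y) \<le> (\<Sum>k | x k \<noteq> y k. w k)"
  unfolding tv_dist_def
proof (rule cSUP_least)
  fix S :: "(real ^ 'n) set"
  assume S: "S \<in> sets borel"
  have "\<bar>measure (discrete_distr w x) S - measure (discrete_distr w y) S\<bar> =
      \<bar>\<Sum>k\<in>UNIV. w k * (indicator S (x k) - indicator S (y k))\<bar>"
    using assms S by (simp add: measure_discrete_distr sum_subtractf right_diff_distrib)
  also have "\<dots> \<le> (\<Sum>k\<in>UNIV. \<bar>w k * (indicator S (x k) - indicator S (y k))\<bar>)"
    by (rule sum_abs)
  also have "\<dots> \<le> (\<Sum>k\<in>UNIV. if x k \<noteq> y k then w k else 0)"
    using assms by (intro sum_mono) (auto simp: prob_weights_def indicator_def)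
  also have "\<dots> = (\<Sum>k | x k \<noteq> y k. w k)"
    by (simp add: sum.If_cases)
  finally show "\<bar>measure (discrete_distr w x) S - measure (discrete_distr w y) S\<bar>
      \<le> (\<Sum>k | x k \<noteq> y k. w k)" .
qed auto

lemma sum_UNIV_option:
  fixes f :: "'a::finite option \<Rightarrow> 'b::comm_monoid_add"
  shows "(\<Sum>k\<in>UNIV. f k) = f None + (\<Sum>j\<in>UNIV. f (Some j))"
  by (simp add: UNIV_option_conv sum.reindex)

text \<open>The vertices are \<open>-1\<close> and \<open>a e\<^sub>k + b 1\<close> with \<open>a = \<surd>(d + 1)\<close> and
  \<open>b = (1 - a) / d\<close>, the coefficients for which they sum to \<open>0\<close> and form a tight frame.\<close>

definition simplex_vertex :: "'n::finite option \<Rightarrow> real ^ 'n" where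
  "simplex_vertex j = (case j of
      None \<Rightarrow> (\<chi> l. -1)
    | Some k \<Rightarrow> (\<chi> l. (if l = k then sqrt (real CARD('n) + 1) else 0)
                     + (1 - sqrt (real CARD('n) + 1)) / real CARD('n)))"

lemma simplex_coefficients:
  fixes d :: real
  assumes "d > 0" and a: "a = sqrt (d + 1)" and b: "b = (1 - sqrt (d + 1)) / d"
  shows "a + d * b = 1" and "a\<^sup>2 = d + 1" and "b * (a + 1) = -1"
proof -
  show "a + d * b = 1" and a2: "a\<^sup>2 = d + 1"
    using assms by simp_all
  have "b * (a + 1) = (1 - a\<^sup>2) / d"
    using assms(1) by (simp add: a b field_simps power2_eq_square)
  then show "b * (a + 1) = -1"
    using a2 assms(1) by simp
qed

lemma inner_simplex_vertex:
  fixes u :: "real ^ 'n::finite"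
  defines "a \<equiv> sqrt (real CARD('n) + 1)" and "b \<equiv> (1 - sqrt (real CARD('n) + 1)) / real CARD('n)"
  shows "u \<bullet> simplex_vertex None = - (\<Sum>l\<in>UNIV. u $ l)"
    and "u \<bullet> simplex_vertex (Some k) = a * u $ k + b * (\<Sum>l\<in>UNIV. u $ l)"
proof -
  show "u \<bullet> simplex_vertex None = - (\<Sum>l\<in>UNIV. u $ l)"
    by (simp add: simplex_vertex_def inner_vec_def sum_negf)
  have "u \<bullet> simplex_vertex (Some k) = (\<Sum>l\<in>UNIV. u $ l * ((if l = k then a else 0) + b))"
    unfolding simplex_vertex_def a_def b_def by (simp add: inner_vec_def)
  also have "\<dots> = (\<Sum>l\<in>UNIV. u $ l * (if l = k then a else 0)) + (\<Sum>l\<in>UNIV. b * u $ l)"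
    by (simp add: distrib_left sum.distrib mult.commute)
  also have "(\<Sum>l\<in>UNIV. u $ l * (if l = k then a else 0)) = (\<Sum>l\<in>UNIV. if l = k then a * u $ k else 0)"
    by (rule sum.cong) auto
  finally show "u \<bullet> simplex_vertex (Some k) = a * u $ k + b * (\<Sum>l\<in>UNIV. u $ l)"
    by (simp add: sum_distrib_left)
qed

lemma sum_simplex_vertex: "(\<Sum>j\<in>UNIV. simplex_vertex j) = (0 :: real ^ 'n::finite)"
proof -
  have "(\<Sum>k\<in>UNIV. (if l = k then sqrt (real CARD('n) + 1) else 0)
      + (1 - sqrt (real CARD('n) + 1)) / real CARD('n)) = 1" for l :: 'n
    using simplex_coefficients(1)[of "real CARD('n)"] by (simp add: sum.distrib)
  then show ?thesis
    by (simp add: vec_eq_iff sum_UNIV_option sum_component simplex_vertex_def)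
qed

lemma simplex_vertex_tight_frame:
  fixes u :: "real ^ 'n::finite"
  shows "(\<Sum>j\<in>UNIV. (u \<bullet> simplex_vertex j)\<^sup>2) = (real CARD('n) + 1) * (u \<bullet> u)"
proof -
  define d where "d = real CARD('n)"
  define a where "a = sqrt (d + 1)"
  define b where "b = (1 - sqrt (d + 1)) / d"
  define s where "s = (\<Sum>l\<in>UNIV. u $ l)"
  have coeffs: "a + d * b = 1" "a\<^sup>2 = d + 1" "b * (a + 1) = -1"
    using simplex_coefficients[OF _ a_def b_def] by (simp_all add: d_def)
  have "(\<Sum>j\<in>UNIV. (u \<bullet> simplex_vertex j)\<^sup>2) = s\<^sup>2 + (\<Sum>k\<in>UNIV. (a * u $ k + b * s)\<^sup>2)"
    by (simp add: sum_UNIV_option inner_simplex_vertex s_def a_def b_def d_def)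
  also have "(\<Sum>k\<in>UNIV. (a * u $ k + b * s)\<^sup>2) =
      a\<^sup>2 * (\<Sum>k\<in>UNIV. (u $ k)\<^sup>2) + 2 * a * b * s * (\<Sum>k\<in>UNIV. u $ k) + d * b\<^sup>2 * s\<^sup>2"
    by (simp add: power2_eq_square algebra_simps sum.distrib sum_distrib_left d_def)
  also have "(\<Sum>k\<in>UNIV. (u $ k)\<^sup>2) = u \<bullet> u"
    by (simp add: inner_vec_def power2_eq_square)
  finally have "(\<Sum>j\<in>UNIV. (u \<bullet> simplex_vertex j)\<^sup>2) = a\<^sup>2 * (u \<bullet> u) + (b * (2 * a + d * b) + 1) * s\<^sup>2"
    by (simp add: s_def power2_eq_square algebra_simps)
  also have "2 * a + d * b = a + 1"
    using coeffs(1) by simp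
  finally show ?thesis
    using coeffs(2,3) by (simp add: d_def)
qed

lemma norm_simplex_vertex: "norm (simplex_vertex j :: real ^ 'n::finite) = sqrt (real CARD('n))"
proof -
  define d where "d = real CARD('n)"
  define a where "a = sqrt (d + 1)"
  define b where "b = (1 - sqrt (d + 1)) / d"
  have coeffs: "a + d * b = 1" "a\<^sup>2 = d + 1" "b * (a + 1) = -1"
    using simplex_coefficients[OF _ a_def b_def] by (simp_all add: d_def)
  have "simplex_vertex j \<bullet> simplex_vertex j = d"
  proof (cases j)
    case (Some k)
    have "(\<Sum>l\<in>UNIV. simplex_vertex (Some k) $ l) = a + d * b"
      using inner_simplex_vertex(2)[of "\<chi> l. 1" k] by (simp add: inner_vec_def a_def b_def d_def)
    then have "simplex_vertex j \<bullet> simplex_vertex j = a * (a + b) + b"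
      using Some inner_simplex_vertex(2)[of "simplex_vertex (Some k)" k] coeffs(1)
      by (simp add: simplex_vertex_def a_def b_def d_def)
    also have "\<dots> = a\<^sup>2 + b * (a + 1)"
      by (simp add: algebra_simps power2_eq_square)
    finally show ?thesis
      using coeffs(2,3) by simp
  qed (simp add: inner_simplex_vertex(1), simp add: simplex_vertex_def d_def)
  then show ?thesis
    by (simp add: norm_eq_sqrt_inner d_def)
qed

lemma card_mult_norm_le_sum_dist:
  fixes \<mu> :: "'j::finite \<Rightarrow> 'a::real_inner"
  assumes norm_\<mu>: "\<And>j. norm (\<mu> j) = R" and sum_\<mu>: "(\<Sum>j\<in>UNIV. \<mu> j) = 0"
  shows "real CARD('j) * R \<le> (\<Sum>j\<in>UNIV. norm (y - \<mu> j))"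
proof (cases "R = 0")
  case False
  then have "R > 0"
    using norm_\<mu> norm_ge_zero by (metis less_eq_real_def)
  have "R\<^sup>2 - y \<bullet> \<mu> j \<le> R * norm (y - \<mu> j)" for j
  proof -
    have "R\<^sup>2 - y \<bullet> \<mu> j = (\<mu> j - y) \<bullet> \<mu> j"
      using norm_\<mu>[of j] by (simp add: inner_diff_left flip: power2_norm_eq_inner)
    also have "\<dots> \<le> norm (\<mu> j - y) * norm (\<mu> j)"
      by (rule Cauchy_Schwarz_ineq2[THEN abs_le_D1])
    finally show ?thesis
      by (simp add: norm_\<mu> norm_minus_commute mult.commute)
  qed
  then have "(\<Sum>j\<in>UNIV. R\<^sup>2 - y \<bullet> \<mu> j) \<le> R * (\<Sum>j\<in>UNIV. norm (y - \<mu> j))"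
    by (simp add: sum_distrib_left sum_mono)
  moreover have "(\<Sum>j\<in>UNIV. R\<^sup>2 - y \<bullet> \<mu> j) = R * (real CARD('j) * R)"
    by (simp add: sum_subtractf sum_\<mu> power2_eq_square flip: inner_sum_right)
  ultimately show ?thesis
    using \<open>R > 0\<close> by simp
qed (simp add: sum_nonneg)

lemma ex_ge_of_card_mult_le_sum:
  fixes E :: "'j::finite \<Rightarrow> ennreal"
  assumes "0 \<le> R" and "ennreal (real CARD('j) * R) \<le> (\<Sum>j\<in>UNIV. E j)"
  shows "\<exists>j. ennreal R \<le> E j"
proof -
  have "Max (range E) \<in> range E"
    by (rule Max_in) simp_all
  then obtain j0 where "Max (range E) = E j0"
    by blast
  then have j0: "E j \<le> E j0" for j
    using Max_ge[of "range E" "E j"] by simp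
  have "ennreal (real CARD('j)) * ennreal R = ennreal (real CARD('j) * R)"
    using assms(1) by (simp add: ennreal_mult)
  also have "\<dots> \<le> (\<Sum>j\<in>UNIV. E j)"
    by (rule assms(2))
  also have "\<dots> \<le> ennreal (real CARD('j)) * E j0"
    using sum_bounded_above[of UNIV E "E j0"] j0 by (simp add: ennreal_of_nat_eq_real_of_nat)
  finally have "ennreal (real CARD('j)) * ennreal R \<le> ennreal (real CARD('j)) * E j0" .
  then have "ennreal R \<le> E j0"
    by (rule ennreal_mult_le_mult_iff[THEN iffD1, rotated 2]) simp_all
  then show ?thesis
    by blast
qed

lemma ex_nn_integral_norm_diff_ge:
  fixes \<mu> :: "'j::finite \<Rightarrow> 'a::euclidean_space"
  assumes "prob_space P" and sets_P: "sets P = sets borel"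
    and norm_\<mu>: "\<And>j. norm (\<mu> j) = R" and "(\<Sum>j\<in>UNIV. \<mu> j) = 0"
  shows "\<exists>j. ennreal R \<le> (\<integral>\<^sup>+y. ennreal (norm (y - \<mu> j)) \<partial>P)"
proof (rule ex_ge_of_card_mult_le_sum)
  interpret P: prob_space P by fact
  show "0 \<le> R"
    using norm_\<mu> norm_ge_zero by metis
  have "ennreal (real CARD('j) * R) = (\<integral>\<^sup>+y. ennreal (real CARD('j) * R) \<partial>P)"
    by (simp add: P.emeasure_space_1)
  also have "\<dots> \<le> (\<integral>\<^sup>+y. ennreal (\<Sum>j\<in>UNIV. norm (y - \<mu> j)) \<partial>P)"
    using assms(3,4) by (intro nn_integral_mono ennreal_leI card_mult_norm_le_sum_dist)
  also have "\<dots> = (\<integral>\<^sup>+y. (\<Sum>j\<in>UNIV. ennreal (norm (y - \<mu> j))) \<partial>P)"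
    by simp
  also have "\<dots> = (\<Sum>j\<in>UNIV. \<integral>\<^sup>+y. ennreal (norm (y - \<mu> j)) \<partial>P)"
    by (rule nn_integral_sum) (simp_all add: measurable_cong_sets[OF sets_P refl])
  finally show "ennreal (real CARD('j) * R) \<le> (\<Sum>j\<in>UNIV. \<integral>\<^sup>+y. ennreal (norm (y - \<mu> j)) \<partial>P)" .
qed

definition simplex_weights :: "real \<Rightarrow> 'n::finite option option \<Rightarrow> real" where
  "simplex_weights \<epsilon> k = (case k of None \<Rightarrow> 1 - (real CARD('n) + 1) * \<epsilon> | Some _ \<Rightarrow> \<epsilon>)"

definition reflected_simplex_atoms :: "'n::finite option option \<Rightarrow> real ^ 'n" where
  "reflected_simplex_atoms k = (case k of None \<Rightarrow> 0 | Some j \<Rightarrow> - simplex_vertex j)"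

definition simplex_atoms :: "'n::finite option \<Rightarrow> 'n option option \<Rightarrow> real ^ 'n" where
  "simplex_atoms i = reflected_simplex_atoms(Some i := simplex_vertex i)"

lemma prob_weights_simplex_weights:
  assumes "0 \<le> \<epsilon>" and "(real CARD('n) + 1) * \<epsilon> \<le> 1"
  shows "prob_weights (simplex_weights \<epsilon> :: 'n::finite option option \<Rightarrow> real)"
  using assms
  by (simp add: prob_weights_def simplex_weights_def sum_UNIV_option card_UNIV_option split: option.split)

lemma dist_mean_simplex_atoms:
  assumes "prob_weights (simplex_weights \<epsilon> :: 'n::finite option option \<Rightarrow> real)"
  shows "dist_mean (discrete_distr (simplex_weights \<epsilon>) (simplex_atoms i)) = (2 * \<epsilon>) *\<^sub>R simplex_vertex (i :: 'n option)"
proof -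
  have "dist_mean (discrete_distr (simplex_weights \<epsilon>) (simplex_atoms i)) =
      (\<Sum>j\<in>UNIV. \<epsilon> *\<^sub>R (if j = i then simplex_vertex j else - simplex_vertex j))"
    unfolding dist_mean_discrete_distr[OF assms]
    by (subst sum_UNIV_option)
      (auto simp: simplex_weights_def simplex_atoms_def reflected_simplex_atoms_def intro!: sum.cong)
  also have "\<dots> = (\<Sum>j\<in>UNIV. \<epsilon> *\<^sub>R ((if j = i then 2 *\<^sub>R simplex_vertex j else 0) - simplex_vertex j))"
    by (rule sum.cong) (auto simp: scaleR_2)
  also have "\<dots> = (2 * \<epsilon>) *\<^sub>R simplex_vertex i"
    by (simp add: sum_subtractf sum_simplex_vertex flip: scaleR_diff_right scaleR_sum_right)
  finally show ?thesis .
qed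

lemma bounded_cov_simplex_atoms:
  assumes "prob_weights (simplex_weights \<epsilon> :: 'n::finite option option \<Rightarrow> real)"
    and "(real CARD('n) + 1) * \<epsilon> \<le> \<sigma>\<^sup>2"
  shows "bounded_cov \<sigma> (discrete_distr (simplex_weights \<epsilon>) (simplex_atoms (i :: 'n option)))"
  using assms(1)
proof (rule bounded_cov_discrete_distr)
  fix u :: "real ^ 'n"
  have atom_None: "simplex_atoms i None = 0"
    by (simp add: simplex_atoms_def reflected_simplex_atoms_def)
  have atom_Some: "(u \<bullet> simplex_atoms i (Some j))\<^sup>2 = (u \<bullet> simplex_vertex j)\<^sup>2" for j
    by (cases "j = i") (simp_all add: simplex_atoms_def reflected_simplex_atoms_def)
  have "(\<Sum>k\<in>UNIV. simplex_weights \<epsilon> k * (u \<bullet> simplex_atoms i k)\<^sup>2) =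
      \<epsilon> * (\<Sum>j\<in>UNIV. (u \<bullet> simplex_vertex j)\<^sup>2)"
    by (simp only: sum_UNIV_option atom_None atom_Some) (simp add: simplex_weights_def distrib_left sum_distrib_left)
  also have "\<dots> = (real CARD('n) + 1) * \<epsilon> * (u \<bullet> u)"
    by (simp add: simplex_vertex_tight_frame)
  also have "\<dots> \<le> \<sigma>\<^sup>2 * (u \<bullet> u)"
    using assms(2) by (intro mult_right_mono) simp_all
  finally show "(\<Sum>k\<in>UNIV. simplex_weights \<epsilon> k * (u \<bullet> simplex_atoms i k)\<^sup>2) \<le> \<sigma>\<^sup>2 * (u \<bullet> u)" .
qed

lemma tv_dist_simplex_atoms_le:
  assumes "prob_weights (simplex_weights \<epsilon> :: 'n::finite option option \<Rightarrow> real)"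
  shows "tv_dist (discrete_distr (simplex_weights \<epsilon>) (simplex_atoms (i :: 'n option)))
    (discrete_distr (simplex_weights \<epsilon>) reflected_simplex_atoms) \<le> \<epsilon>"
proof -
  have "tv_dist (discrete_distr (simplex_weights \<epsilon>) (simplex_atoms i))
      (discrete_distr (simplex_weights \<epsilon>) reflected_simplex_atoms)
      \<le> (\<Sum>k | simplex_atoms i k \<noteq> reflected_simplex_atoms k. simplex_weights \<epsilon> k)"
    by (rule tv_dist_discrete_distr_le[OF assms])
  also have "\<dots> \<le> (\<Sum>k\<in>{Some i}. simplex_weights \<epsilon> k)"
  proof (rule sum_mono2)
    show "{k. simplex_atoms i k \<noteq> reflected_simplex_atoms k} \<subseteq> {Some i}"
      by (auto simp: simplex_atoms_def)
    show "0 \<le> simplex_weights \<epsilon> k" for k :: "'n option option"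
      using assms unfolding prob_weights_def by blast
  qed simp
  finally show ?thesis
    by (simp add: simplex_weights_def)
qed

lemma simplex_hard_instance:
  fixes \<epsilon> \<sigma> :: real and A :: "real \<Rightarrow> real \<Rightarrow> (real ^ 'n::finite) measure \<Rightarrow> (real ^ 'n) measure"
  assumes "0 \<le> \<epsilon>" and "(real CARD('n) + 1) * \<epsilon> \<le> 1" and "(real CARD('n) + 1) * \<epsilon> \<le> \<sigma>\<^sup>2"
    and "\<And>e s M. is_distribution (A e s M)"
  shows "\<exists>D D'. bounded_cov \<sigma> D \<and> is_distribution D' \<and> tv_dist D D' \<le> \<epsilon> \<and>
    ennreal (2 * \<epsilon> * sqrt (real CARD('n))) \<le> alg_error A \<epsilon> \<sigma> D' (dist_mean D)"
proof -
  define D' :: "(real ^ 'n) measure" where "D' = discrete_distr (simplex_weights \<epsilon>) reflected_simplex_atoms"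
  define D where "D i = discrete_distr (simplex_weights \<epsilon>) (simplex_atoms (i :: 'n option))" for i
  have weights: "prob_weights (simplex_weights \<epsilon> :: 'n option option \<Rightarrow> real)"
    using assms(1,2) by (rule prob_weights_simplex_weights)
  have algorithm_output: "prob_space (A \<epsilon> (\<sigma>\<^sup>2) D')" "sets (A \<epsilon> (\<sigma>\<^sup>2) D') = sets borel"
    using assms(4) by (simp_all add: is_distribution_def)
  have norm_means: "norm ((2 * \<epsilon>) *\<^sub>R simplex_vertex j) = 2 * \<epsilon> * sqrt (real CARD('n))" for j :: "'n option"
    using assms(1) by (simp add: norm_simplex_vertex)
  have sum_means: "(\<Sum>j\<in>UNIV. (2 * \<epsilon>) *\<^sub>R simplex_vertex j) = (0 :: real ^ 'n)"
    by (simp add: sum_simplex_vertex flip: scaleR_sum_right)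
  obtain i where "ennreal (2 * \<epsilon> * sqrt (real CARD('n))) \<le>
      (\<integral>\<^sup>+y. ennreal (norm (y - (2 * \<epsilon>) *\<^sub>R simplex_vertex i)) \<partial>A \<epsilon> (\<sigma>\<^sup>2) D')"
    using ex_nn_integral_norm_diff_ge[OF algorithm_output norm_means sum_means] by blast
  then have "ennreal (2 * \<epsilon> * sqrt (real CARD('n))) \<le> alg_error A \<epsilon> \<sigma> D' (dist_mean (D i))"
    by (simp add: alg_error_def D_def dist_mean_simplex_atoms[OF weights])
  moreover have "bounded_cov \<sigma> (D i)"
    unfolding D_def using weights assms(3) by (rule bounded_cov_simplex_atoms)
  moreover have "tv_dist (D i) D' \<le> \<epsilon>"
    unfolding D_def D'_def using weights by (rule tv_dist_simplex_atoms_le)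
  moreover have "is_distribution D'"
    unfolding D'_def by (rule is_distribution_discrete_distr)
  ultimately show ?thesis
    by blast
qed

lemma jung_const_mult_sqrt:
  assumes "0 \<le> \<epsilon>"
  shows "jung_const d * sqrt (2 * ((real d + 1) * \<epsilon>) * \<epsilon>) = 2 * \<epsilon> * sqrt (real d)"
proof -
  have "jung_const d * sqrt (2 * ((real d + 1) * \<epsilon>) * \<epsilon>) =
      sqrt (2 * real d / (real d + 1) * (2 * ((real d + 1) * \<epsilon>) * \<epsilon>))"
    by (simp add: jung_const_def flip: real_sqrt_mult)
  also have "2 * real d / (real d + 1) * (2 * ((real d + 1) * \<epsilon>) * \<epsilon>) = (2 * \<epsilon>)\<^sup>2 * real d"
    by (simp add: field_simps power2_eq_square add_pos_nonneg)
  also have "sqrt \<dots> = 2 * \<epsilon> * sqrt (real d)"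
    using assms by (simp add: real_sqrt_mult)
  finally show ?thesis .
qed

theorem lemma21:
  fixes \<epsilon> :: real
    and A :: "real \<Rightarrow> real \<Rightarrow> (real ^ 'n) measure \<Rightarrow> (real ^ 'n) measure"
  assumes "0 \<le> \<epsilon>"
    and "\<epsilon> \<le> 1 / (real CARD('n) + 1)"
    and "\<And>e s M. is_distribution (A e s M)"
  shows "\<exists>\<sigma> > 0. \<exists>D D'. bounded_cov \<sigma> D \<and> is_distribution D' \<and> tv_dist D D' \<le> \<epsilon> \<and>
           alg_error A \<epsilon> \<sigma> D' (dist_mean D)
             \<ge> ennreal (jung_const CARD('n) * sqrt (2 * \<sigma>\<^sup>2 * \<epsilon>))"
proof -
  \<comment> \<open>For \<open>\<epsilon> = 0\<close> the bound is trivial, but \<open>\<sigma>\<close> must still be positive.\<close>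
  define \<sigma> where "\<sigma> = (if \<epsilon> = 0 then 1 else sqrt ((real CARD('n) + 1) * \<epsilon>))"
  have "\<sigma> > 0" and "(real CARD('n) + 1) * \<epsilon> \<le> \<sigma>\<^sup>2"
    using assms(1) by (auto simp: \<sigma>_def)
  moreover have "(real CARD('n) + 1) * \<epsilon> \<le> 1"
    using assms(2) by (simp add: field_simps add_pos_nonneg)
  ultimately obtain D D' where D: "bounded_cov \<sigma> D" "is_distribution D'" "tv_dist D D' \<le> \<epsilon>"
    and error: "ennreal (2 * \<epsilon> * sqrt (real CARD('n))) \<le> alg_error A \<epsilon> \<sigma> D' (dist_mean D)"
    using simplex_hard_instance[of \<epsilon> \<sigma> A] assms(1,3) by blast
  have "jung_const CARD('n) * sqrt (2 * \<sigma>\<^sup>2 * \<epsilon>) = 2 * \<epsilon> * sqrt (real CARD('n))"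
    using assms(1) jung_const_mult_sqrt[of \<epsilon> "CARD('n)"] by (auto simp: \<sigma>_def)
  with error have "ennreal (jung_const CARD('n) * sqrt (2 * \<sigma>\<^sup>2 * \<epsilon>)) \<le> alg_error A \<epsilon> \<sigma> D' (dist_mean D)"
    by simp
  with D \<open>\<sigma> > 0\<close> show ?thesis
    by blast
qed

end
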